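(* Let $(\mathcal{N},\mathcal{E})$ be a connected graph with $N$ nodes, $E$ edges and incidence matrix $\mathbf{B}$, with nodes numbered so that those outside a nonempty strict subset $\mathcal{N}_0\subset\mathcal{N}$ come first, and partition $\mathbf{B}^\top=[\mathbf{B}_1^\top~\mathbf{B}_0^\top]$ accordingly ($\mathbf{B}_0$ = rows indexed by $\mathcal{N}_0$). Let $w_e\in\mathbb{C}\setminus\{0\}$, $\mathbf{W}=\mathrm{diag}(\{w_e\}_{e\in\mathcal{E}})$, and let $\mathbf{P}$ be a real full-column-rank matrix with $\mathrm{range}(\mathbf{P})=\mathrm{null}(\mathbf{B}_0)$; assume $\mathbf{P}^\top\mathbf{W}\mathbf{P}$ and $\mathbf{B}_0\mathbf{W}^{-1}\mathbf{B}_0^\top$ are invertible (e.g. if $\mathrm{Re}(w_e)\ge0$, $\mathrm{Im}(w_e)\ge0$ for all $e$). Define the Laplacian $\widetilde{\mathbf{W}}=\mathbf{B}\mathbf{W}^{-1}\mathbf{B}^\top=\begin{bmatrix}\widetilde{\mathbf{W}}_{11}&\widetilde{\mathbf{W}}_{10}\\ \widetilde{\mathbf{W}}_{10}^\top&\widetilde{\mathbf{W}}_{00}\end{bmatrix}$, with $\widetilde{\mathbf{W}}_{00}$ the block indexed by $\mathcal{N}_0$. Then $$\mathbf{B}_1\mathbf{P}(\mathbf{P}^\top\mathbf{W}\mathbf{P})^{-1}\mathbf{P}^\top\mathbf{B}_1^\top=\widetilde{\mathbf{W}}\setminus\widetilde{\mathbf{W}}_{00}:=\widetilde{\mathbf{W}}_{11}-\widetilde{\mathbf{W}}_{10}\widetilde{\mathbf{W}}_{00}^{-1}\widetilde{\mathbf{W}}_{10}^\top.$$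 In particular, for edge resistances $r_e\ge0$, inductances $\ell_e>0$ and $\omega>0$, with $\mathbf{R}=\mathrm{diag}(\{r_e\})$, $\mathbf{L}=\mathrm{diag}(\{\ell_e\})$: (a) taking $\mathbf{W}=\mathbf{R}+\jmath\omega\mathbf{L}$ gives $\mathbf{B}_1\mathbf{P}(\mathbf{P}^\top(\mathbf{R}+\jmath\omega\mathbf{L})\mathbf{P})^{-1}\mathbf{P}^\top\mathbf{B}_1^\top=\mathbf{Y}_{11}-\mathbf{Y}_{10}\mathbf{Y}_{00}^{-1}\mathbf{Y}_{10}^\top$ (the Kron-reduced admittance matrix), where $\mathbf{Y}=\mathbf{B}(\mathbf{R}+\jmath\omega\mathbf{L})^{-1}\mathbf{B}^\top$ is partitioned in the same way; (b) taking $\mathbf{W}=\mathbf{L}$ gives $\mathbf{B}_1\mathbf{P}(\mathbf{P}^\top\mathbf{L}\mathbf{P})^{-1}\mathbf{P}^\top\mathbf{B}_1^\top=\widetilde{\mathbf{L}}_{11}-\widetilde{\mathbf{L}}_{10}\widetilde{\mathbf{L}}_{00}^{-1}\widetilde{\mathbf{L}}_{10}^\top$, where $\widetilde{\mathbf{L}}=\mathbf{B}\mathbf{L}^{-1}\mathbf{B}^\top$ is partitioned in the same way.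
   Context: Each edge is given an arbitrary orientation $e=(m,n)$. The incidence matrix $\mathbf{B}\in\{0,\pm1\}^{N\times E}$ has entries $B_{k,e}=1$ if $k=m$, $B_{k,e}=-1$ if $k=n$, for $e=(m,n)$, and $B_{k,e}=0$ otherwise. $^\top$ denotes the (non-conjugate) transpose and $\jmath=\sqrt{-1}$. *)

theory Defs
  imports Complex_Main "Jordan_Normal_Form.Matrix"
begin

text \<open>Graph on nodes 0..<N given by a list of oriented edges (m,n), edge e = edges ! e.\<close>

definition valid_graph :: "nat \<Rightarrow> (nat \<times> nat) list \<Rightarrow> bool" where
  "valid_graph N edges \<longleftrightarrow> (\<forall>e \<in> set edges. fst e < N \<and> snd e < N \<and> fst e \<noteq> snd e)"

definition adj_rel :: "(nat \<times> nat) list \<Rightarrow> nat rel" where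
  "adj_rel edges = set edges \<union> (set edges)\<inverse>"

definition connected_graph :: "nat \<Rightarrow> (nat \<times> nat) list \<Rightarrow> bool" where
  "connected_graph N edges \<longleftrightarrow> valid_graph N edges \<and>
     (\<forall>u < N. \<forall>v < N. (u, v) \<in> (adj_rel edges)\<^sup>*)"

definition incidence :: "nat \<Rightarrow> (nat \<times> nat) list \<Rightarrow> 'a::ring_1 mat" where
  "incidence N edges = mat N (length edges)
     (\<lambda>(k, e). if k = fst (edges ! e) then 1 else if k = snd (edges ! e) then -1 else 0)"

definition subm :: "'a mat \<Rightarrow> nat \<Rightarrow> nat \<Rightarrow> nat \<Rightarrow> nat \<Rightarrow> 'a mat" where
  "subm A r0 nr c0 nc = mat nr nc (\<lambda>(i, j). A $$ (r0 + i, c0 + j))"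

text \<open>Matrix inverse (meaningful for invertible square matrices).\<close>
definition minv :: "'a::field mat \<Rightarrow> 'a mat" where
  "minv A = (SOME B. inverts_mat A B \<and> inverts_mat B A)"

definition schur_compl :: "'a::field mat \<Rightarrow> nat \<Rightarrow> nat \<Rightarrow> 'a mat" where
  "schur_compl M n1 n0 =
     subm M 0 n1 0 n1 - subm M 0 n1 n1 n0 * minv (subm M n1 n0 n1 n0) * transpose_mat (subm M 0 n1 n1 n0)"

end

theory Submission
  imports Defs "Jordan_Normal_Form.Determinant"
begin

text \<open>Write \<open>M = W\<^sup>-\<^sup>1\<close>. The matrix \<open>H = M - M B\<^sub>0\<^sup>T (B\<^sub>0 M B\<^sub>0\<^sup>T)\<^sup>-\<^sup>1 B\<^sub>0 M\<close> has its columns in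
  \<open>ker B\<^sub>0 = range P\<close> and satisfies \<open>P\<^sup>T W H = P\<^sup>T\<close>; these two properties force
  \<open>H = P (P\<^sup>T W P)\<^sup>-\<^sup>1 P\<^sup>T\<close>. Sandwiching between \<open>B\<^sub>1\<close> and \<open>B\<^sub>1\<^sup>T\<close> and reading off the blocks of
  \<open>B M B\<^sup>T\<close> gives the Schur complement.

  For \<open>W = R + j\<omega>L\<close> and \<open>W = L\<close> the two invertibility hypotheses come for free. As \<open>P\<close> is
  real, the Hermitian form of \<open>P\<^sup>T W P\<close> at \<open>x\<close> is \<open>\<Sum>\<^sub>e w\<^sub>e |(P x)\<^sub>e|\<^sup>2\<close>; after multiplying by a
  suitable unit \<open>c\<close> all \<open>Re (c w\<^sub>e)\<close> are positive, so the form vanishes only if \<open>P x = 0\<close>, i.e.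
  \<open>x = 0\<close>. The same argument applies to \<open>B\<^sub>0 W\<^sup>-\<^sup>1 B\<^sub>0\<^sup>T\<close>, where injectivity of \<open>B\<^sub>0\<^sup>T\<close> comes
  from connectivity: a potential that vanishes on the first \<open>n\<^sub>1 > 0\<close> nodes and has no drop
  across any edge vanishes everywhere.\<close>

lemma minv_inverse:
  fixes A :: "'a::field mat"
  assumes inv: "invertible_mat A" and A: "A \<in> carrier_mat n n"
  shows "minv A \<in> carrier_mat n n" "A * minv A = 1\<^sub>m n" "minv A * A = 1\<^sub>m n"
proof -
  have "\<exists>B. inverts_mat A B \<and> inverts_mat B A"
    using inv unfolding invertible_mat_def by auto
  then have "inverts_mat A (minv A) \<and> inverts_mat (minv A) A"
    unfolding minv_def by (rule someI_ex)
  then have AM: "A * minv A = 1\<^sub>m n" and MA: "minv A * A = 1\<^sub>m (dim_row (minv A))"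
    using A unfolding inverts_mat_def by auto
  have "dim_col (minv A) = n"
    using arg_cong[OF AM, of dim_col] by simp
  moreover have "dim_row (minv A) = n"
    using arg_cong[OF MA, of dim_col] A by simp
  ultimately show "minv A \<in> carrier_mat n n" by auto
  then show "A * minv A = 1\<^sub>m n" "minv A * A = 1\<^sub>m n"
    using AM MA by auto
qed

lemma minv_eqI:
  fixes A :: "'a::field mat"
  assumes A: "A \<in> carrier_mat n n" and B: "B \<in> carrier_mat n n"
    and AB: "A * B = 1\<^sub>m n" and BA: "B * A = 1\<^sub>m n"
  shows "minv A = B"
proof -
  have "invertible_mat A"
    unfolding invertible_mat_def inverts_mat_def using A B AB BA by auto
  note M = minv_inverse[OF this A]
  have "minv A = minv A * (A * B)" using M(1) AB by simp
  also have "\<dots> = (minv A * A) * B" using M(1) A B by simp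
  also have "\<dots> = B" using M(3) B by simp
  finally show ?thesis .
qed

lemma invertible_mat_if_kernel_trivial:
  fixes A :: "'a::field mat"
  assumes A: "A \<in> carrier_mat n n"
    and ker: "\<forall>v\<in>carrier_vec n. A *\<^sub>v v = 0\<^sub>v n \<longrightarrow> v = 0\<^sub>v n"
  shows "invertible_mat A"
proof -
  have "det A \<noteq> 0" using det_0_iff_vec_prod_zero_field[OF A] ker by auto
  from det_non_zero_imp_unit[OF A this, of "()"]
  obtain B where "B \<in> carrier_mat n n" "B * A = 1\<^sub>m n" "A * B = 1\<^sub>m n"
    unfolding Units_def ring_mat_def by auto
  then show ?thesis
    unfolding invertible_mat_def inverts_mat_def using A by auto
qed

lemma minv_mat_diag:
  fixes d :: "nat \<Rightarrow> 'a::field"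
  assumes "\<forall>i<n. d i \<noteq> 0"
  shows "minv (mat_diag n d) = mat_diag n (\<lambda>i. inverse (d i))"
proof (rule minv_eqI)
  show "mat_diag n d * mat_diag n (\<lambda>i. inverse (d i)) = 1\<^sub>m n"
    "mat_diag n (\<lambda>i. inverse (d i)) * mat_diag n d = 1\<^sub>m n"
    unfolding mat_diag_diag using assms by (auto intro!: eq_matI simp: mat_diag_def)
qed auto

lemma mult_mat_assoc:
  "dim_col (A :: 'a::semiring_0 mat) = dim_row B \<Longrightarrow> dim_col B = dim_row C \<Longrightarrow> A * B * C = A * (B * C)"
  by (rule assoc_mult_mat[of A "dim_row A" "dim_col A" B "dim_col B" C "dim_col C"]) auto

lemma kernel_correction_props:
  fixes W M P B0 S :: "'a::field mat"
  assumes W: "W \<in> carrier_mat E E" and M: "M \<in> carrier_mat E E" and WM: "W * M = 1\<^sub>m E"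
    and P: "P \<in> carrier_mat E k" and B0: "B0 \<in> carrier_mat n0 E" and B0P: "B0 * P = 0\<^sub>m n0 k"
    and S: "S \<in> carrier_mat n0 n0" and SS: "B0 * M * transpose_mat B0 * S = 1\<^sub>m n0"
  shows "B0 * (M - M * transpose_mat B0 * S * B0 * M) = 0\<^sub>m n0 E"
    and "transpose_mat P * W * (M - M * transpose_mat B0 * S * B0 * M) = transpose_mat P"
proof -
  have K: "M * transpose_mat B0 * S * B0 * M \<in> carrier_mat E E"
    using B0 M S by (blast intro: mult_carrier_mat transpose_carrier_mat[THEN iffD2])
  have "B0 * (M * transpose_mat B0 * S * B0 * M) = (B0 * M * transpose_mat B0 * S) * (B0 * M)"
    using B0 M S by (simp add: mult_mat_assoc carrier_matD)
  then show "B0 * (M - M * transpose_mat B0 * S * B0 * M) = 0\<^sub>m n0 E"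
    using B0 M SS by (simp add: mult_minus_distrib_mat[OF B0 M K])
  have PWM: "transpose_mat P * W * M = transpose_mat P"
    using M W P WM by (simp add: mult_mat_assoc carrier_matD)
  have "transpose_mat P * W * (M * transpose_mat B0 * S * B0 * M)
      = transpose_mat P * W * M * transpose_mat B0 * (S * B0 * M)"
    using B0 M S W P by (simp add: mult_mat_assoc carrier_matD)
  also have "\<dots> = transpose_mat (B0 * P) * (S * B0 * M)"
    unfolding PWM using B0 P by (simp add: transpose_mult)
  also have "\<dots> = 0\<^sub>m k E"
    using B0 S M by (simp add: B0P)
  finally have "transpose_mat P * W * (M * transpose_mat B0 * S * B0 * M) = 0\<^sub>m k E" .
  moreover have PW: "transpose_mat P * W \<in> carrier_mat k E"
    using P W by simp
  ultimately show "transpose_mat P * W * (M - M * transpose_mat B0 * S * B0 * M) = transpose_mat P"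
    using P by (simp add: mult_minus_distrib_mat[OF PW M K] PWM) (intro eq_matI; simp)
qed

lemma mat_factor_through_range:
  fixes H P :: "'a::semiring_0 mat"
  assumes H: "H \<in> carrier_mat n m" and P: "P \<in> carrier_mat n k"
    and range: "\<forall>j<m. \<exists>x\<in>carrier_vec k. col H j = P *\<^sub>v x"
  obtains X where "X \<in> carrier_mat k m" "H = P * X"
proof -
  obtain f where f: "\<And>j. j < m \<Longrightarrow> f j \<in> carrier_vec k \<and> col H j = P *\<^sub>v f j"
    using range by metis
  define X where "X = mat k m (\<lambda>(i, j). f j $ i)"
  have "H = P * X"
  proof (rule eq_matI)
    fix i j assume "i < dim_row (P * X)" "j < dim_col (P * X)"
    then have i: "i < n" and j: "j < m" using P by (auto simp: X_def)
    have "col X j = f j" unfolding X_def using j f[OF j] by auto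
    then have "(P * X) $$ (i, j) = (P *\<^sub>v f j) $ i" using i j P by (simp add: X_def)
    also have "\<dots> = H $$ (i, j)" using f[OF j] H i j by (metis carrier_matD index_col)
    finally show "H $$ (i, j) = (P * X) $$ (i, j)" ..
  qed (use H P in \<open>auto simp: X_def\<close>)
  then show thesis using that[of X] by (simp add: X_def)
qed

lemma nullspace_inverse_eq_kernel_correction:
  fixes W M P B0 :: "'a::field mat"
  assumes W: "W \<in> carrier_mat E E" and M: "M \<in> carrier_mat E E" and WM: "W * M = 1\<^sub>m E"
    and P: "P \<in> carrier_mat E k" and B0: "B0 \<in> carrier_mat n0 E" and B0P: "B0 * P = 0\<^sub>m n0 k"
    and range: "\<forall>y\<in>carrier_vec E. B0 *\<^sub>v y = 0\<^sub>v n0 \<longrightarrow> (\<exists>x\<in>carrier_vec k. y = P *\<^sub>v x)"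
    and inv_P: "invertible_mat (transpose_mat P * W * P)"
    and inv_B0: "invertible_mat (B0 * M * transpose_mat B0)"
  shows "P * minv (transpose_mat P * W * P) * transpose_mat P
    = M - M * transpose_mat B0 * minv (B0 * M * transpose_mat B0) * B0 * M"
    (is "P * ?T * _ = ?H")
proof -
  have "transpose_mat P * W * P \<in> carrier_mat k k" "B0 * M * transpose_mat B0 \<in> carrier_mat n0 n0"
    using P W B0 M by auto
  note T = minv_inverse[OF inv_P this(1)] and S = minv_inverse[OF inv_B0 this(2)]
  note H = kernel_correction_props[OF W M WM P B0 B0P S(1,2)]
  have H_carrier: "?H \<in> carrier_mat E E"
    using B0 M S(1) by (blast intro: minus_carrier_mat mult_carrier_mat transpose_carrier_mat[THEN iffD2])
  have "\<exists>x\<in>carrier_vec k. col ?H j = P *\<^sub>v x" if j: "j < E" for j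
  proof (rule range[rule_format])
    have "B0 *\<^sub>v col ?H j = col (B0 * ?H) j" using col_mult2[OF B0 H_carrier j] by simp
    then show "B0 *\<^sub>v col ?H j = 0\<^sub>v n0" using H(1) j by (auto intro!: eq_vecI)
  qed (use H_carrier j in simp)
  then obtain X where X: "X \<in> carrier_mat k E" and HX: "?H = P * X"
    using mat_factor_through_range[OF H_carrier P] by blast
  have "X = ?T * (transpose_mat P * W * P) * X" using T(3) X by simp
  also have "\<dots> = ?T * (transpose_mat P * W * (P * X))"
    using T(1) W P X by (simp add: mult_mat_assoc carrier_matD)
  also have "\<dots> = ?T * transpose_mat P" using H(2) HX by simp
  finally show ?thesis using HX T(1) P by (simp add: mult_mat_assoc carrier_matD)
qed

lemma subm_carrier_mat [simp]: "subm A r0 nr c0 nc \<in> carrier_mat nr nc"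
  unfolding subm_def by auto

lemma dim_subm [simp]: "dim_row (subm A r0 nr c0 nc) = nr" "dim_col (subm A r0 nr c0 nc) = nc"
  unfolding subm_def by auto

lemma subm_mult:
  fixes A :: "'a::semiring_0 mat"
  assumes "r0 + nr \<le> dim_row A" "c0 + nc \<le> dim_col C" "dim_col A = dim_row C"
  shows "subm (A * C) r0 nr c0 nc = subm A r0 nr 0 (dim_col A) * subm C 0 (dim_row C) c0 nc"
  using assms by (intro eq_matI) (auto simp: subm_def scalar_prod_def)

lemma subm_transpose:
  assumes "r0 + nr \<le> dim_col A" "c0 + nc \<le> dim_row A"
  shows "subm (transpose_mat A) r0 nr c0 nc = transpose_mat (subm A c0 nc r0 nr)"
  using assms by (intro eq_matI) (auto simp: subm_def)

lemma subm_full: "A \<in> carrier_mat nr nc \<Longrightarrow> subm A 0 nr 0 nc = A"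
  by (intro eq_matI) (auto simp: subm_def)

lemma subm_map_mat:
  assumes "r0 + nr \<le> dim_row A" "c0 + nc \<le> dim_col A"
  shows "subm (map_mat f A) r0 nr c0 nc = map_mat f (subm A r0 nr c0 nc)"
  using assms by (intro eq_matI) (auto simp: subm_def)

lemma subm_mult_mult_transpose:
  fixes B M :: "'a::comm_ring_1 mat"
  assumes B: "B \<in> carrier_mat N E" and M: "M \<in> carrier_mat E E"
    and "r0 + nr \<le> N" "c0 + nc \<le> N"
  shows "subm (B * M * transpose_mat B) r0 nr c0 nc
    = subm B r0 nr 0 E * M * transpose_mat (subm B c0 nc 0 E)"
proof -
  have "subm (B * M * transpose_mat B) r0 nr c0 nc
      = subm (B * M) r0 nr 0 E * subm (transpose_mat B) 0 E c0 nc"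
    using subm_mult[of r0 nr "B * M" c0 nc "transpose_mat B"] assms by simp
  also have "subm (B * M) r0 nr 0 E = subm B r0 nr 0 E * M"
    using subm_mult[of r0 nr B 0 E M] subm_full[OF M] assms by simp
  also have "subm (transpose_mat B) 0 E c0 nc = transpose_mat (subm B c0 nc 0 E)"
    using B assms by (intro subm_transpose) auto
  finally show ?thesis .
qed

lemma kron_reduction:
  fixes B W M P :: "'a::field mat"
  assumes B: "B \<in> carrier_mat (n1 + n0) E"
    and W: "W \<in> carrier_mat E E" and M: "M \<in> carrier_mat E E" and WM: "W * M = 1\<^sub>m E"
    and M_sym: "transpose_mat M = M"
    and P: "P \<in> carrier_mat E k" and B0P: "subm B n1 n0 0 E * P = 0\<^sub>m n0 k"
    and range: "\<forall>y\<in>carrier_vec E. subm B n1 n0 0 E *\<^sub>v y = 0\<^sub>v n0 \<longrightarrow> (\<exists>x\<in>carrier_vec k. y = P *\<^sub>v x)"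
    and inv_P: "invertible_mat (transpose_mat P * W * P)"
    and inv_B0: "invertible_mat (subm B n1 n0 0 E * M * transpose_mat (subm B n1 n0 0 E))"
  shows "subm B 0 n1 0 E * P * minv (transpose_mat P * W * P) * transpose_mat P
      * transpose_mat (subm B 0 n1 0 E) = schur_compl (B * M * transpose_mat B) n1 n0"
proof -
  define B1 where "B1 = subm B 0 n1 0 E"
  define B0 where "B0 = subm B n1 n0 0 E"
  define S where "S = minv (B0 * M * transpose_mat B0)"
  have B1: "B1 \<in> carrier_mat n1 E" and B0: "B0 \<in> carrier_mat n0 E"
    unfolding B1_def B0_def by auto
  have S: "S \<in> carrier_mat n0 n0"
    unfolding S_def using minv_inverse(1)[OF inv_B0[folded B0_def]] B0 M by simp
  have T: "minv (transpose_mat P * W * P) \<in> carrier_mat k k"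
    using minv_inverse(1)[OF inv_P] P W by simp
  have K: "M * transpose_mat B0 * S * B0 * M \<in> carrier_mat E E"
    using B0 M S by (blast intro: mult_carrier_mat transpose_carrier_mat[THEN iffD2])
  have blocks: "subm (B * M * transpose_mat B) 0 n1 0 n1 = B1 * M * transpose_mat B1"
    "subm (B * M * transpose_mat B) 0 n1 n1 n0 = B1 * M * transpose_mat B0"
    "subm (B * M * transpose_mat B) n1 n0 n1 n0 = B0 * M * transpose_mat B0"
    unfolding B1_def B0_def using subm_mult_mult_transpose[OF B M] by auto
  have "transpose_mat (B1 * M * transpose_mat B0) = B0 * transpose_mat (B1 * M)"
    using B0 B1 M by (subst transpose_mult) auto
  also have "\<dots> = B0 * M * transpose_mat B1"
    using B0 B1 M by (simp add: transpose_mult[OF B1 M] M_sym)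
  finally have blocks_transpose: "transpose_mat (B1 * M * transpose_mat B0) = B0 * M * transpose_mat B1" .
  have "B1 * P * minv (transpose_mat P * W * P) * transpose_mat P * transpose_mat B1
      = B1 * (P * minv (transpose_mat P * W * P) * transpose_mat P) * transpose_mat B1"
    using B1 P T by (simp add: mult_mat_assoc carrier_matD)
  also have "\<dots> = B1 * (M - M * transpose_mat B0 * S * B0 * M) * transpose_mat B1"
    unfolding S_def B0_def
    by (subst nullspace_inverse_eq_kernel_correction[OF W M WM P _ B0P range inv_P inv_B0]) simp_all
  also have "\<dots> = B1 * M * transpose_mat B1 - B1 * (M * transpose_mat B0 * S * B0 * M) * transpose_mat B1"
    unfolding mult_minus_distrib_mat[OF B1 M K]
    using B1 M K by (intro minus_mult_distrib_mat[of _ n1 E _ _ n1]) auto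
  also have "B1 * (M * transpose_mat B0 * S * B0 * M) * transpose_mat B1
      = B1 * M * transpose_mat B0 * S * (B0 * M * transpose_mat B1)"
    using B1 M B0 S by (simp add: mult_mat_assoc carrier_matD)
  finally show ?thesis
    unfolding schur_compl_def blocks blocks_transpose
    unfolding S_def[symmetric] B1_def[symmetric] B0_def[symmetric] .
qed

lemma of_real_mat_mult_vec_Re_Im:
  fixes A :: "real mat" and v :: "complex vec"
  assumes "A \<in> carrier_mat n m" "v \<in> carrier_vec m"
  shows "map_vec Re (map_mat complex_of_real A *\<^sub>v v) = A *\<^sub>v map_vec Re v"
    and "map_vec Im (map_mat complex_of_real A *\<^sub>v v) = A *\<^sub>v map_vec Im v"
  using assms by (auto intro!: eq_vecI simp: scalar_prod_def Re_sum Im_sum)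

lemma map_vec_Re_Im_zero: "map_vec Re (0\<^sub>v n) = 0\<^sub>v n" "map_vec Im (0\<^sub>v n) = 0\<^sub>v n"
  by (auto intro!: eq_vecI)

lemma of_real_mat_kernel_trivial:
  fixes A :: "real mat"
  assumes A: "A \<in> carrier_mat n m"
    and ker: "\<forall>x\<in>carrier_vec m. A *\<^sub>v x = 0\<^sub>v n \<longrightarrow> x = 0\<^sub>v m"
  shows "\<forall>x\<in>carrier_vec m. map_mat complex_of_real A *\<^sub>v x = 0\<^sub>v n \<longrightarrow> x = 0\<^sub>v m"
proof (intro ballI impI)
  fix x :: "complex vec"
  assume x: "x \<in> carrier_vec m" and Ax: "map_mat complex_of_real A *\<^sub>v x = 0\<^sub>v n"
  have "A *\<^sub>v map_vec Re x = 0\<^sub>v n" "A *\<^sub>v map_vec Im x = 0\<^sub>v n"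
    using of_real_mat_mult_vec_Re_Im[OF A x] unfolding Ax map_vec_Re_Im_zero by simp_all
  then have "map_vec Re x = 0\<^sub>v m" "map_vec Im x = 0\<^sub>v m"
    using ker x by auto
  then have "Re (x $ i) = 0 \<and> Im (x $ i) = 0" if "i < m" for i
    using x that by (metis carrier_vecD index_map_vec(1) index_zero_vec(1))
  then show "x = 0\<^sub>v m"
    using x by (intro eq_vecI) (auto simp: complex_eq_iff)
qed

lemma of_real_mat_kernel_subset_range:
  fixes P B0 :: "real mat"
  assumes P: "P \<in> carrier_mat E k" and B0: "B0 \<in> carrier_mat n0 E"
    and range: "{P *\<^sub>v x | x. x \<in> carrier_vec k} = {y \<in> carrier_vec E. B0 *\<^sub>v y = 0\<^sub>v n0}"
  shows "\<forall>y\<in>carrier_vec E. map_mat complex_of_real B0 *\<^sub>v y = 0\<^sub>v n0 \<longrightarrow>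
      (\<exists>x\<in>carrier_vec k. y = map_mat complex_of_real P *\<^sub>v x)"
proof (intro ballI impI)
  fix y :: "complex vec"
  assume y: "y \<in> carrier_vec E" and B0y: "map_mat complex_of_real B0 *\<^sub>v y = 0\<^sub>v n0"
  have "B0 *\<^sub>v map_vec Re y = 0\<^sub>v n0" "B0 *\<^sub>v map_vec Im y = 0\<^sub>v n0"
    using of_real_mat_mult_vec_Re_Im[OF B0 y] unfolding B0y map_vec_Re_Im_zero by simp_all
  then have "map_vec Re y \<in> {P *\<^sub>v x | x. x \<in> carrier_vec k}"
    "map_vec Im y \<in> {P *\<^sub>v x | x. x \<in> carrier_vec k}"
    unfolding range using y by auto
  then obtain xr xi where x: "xr \<in> carrier_vec k" "xi \<in> carrier_vec k"
    and y_Re: "map_vec Re y = P *\<^sub>v xr" and y_Im: "map_vec Im y = P *\<^sub>v xi"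
    by blast
  define x where "x = vec k (\<lambda>i. Complex (xr $ i) (xi $ i))"
  have "y = map_mat complex_of_real P *\<^sub>v x"
  proof (rule eq_vecI)
    fix j assume "j < dim_vec (map_mat complex_of_real P *\<^sub>v x)"
    then have j: "j < E" using P by simp
    have "Re (y $ j) = (P *\<^sub>v xr) $ j" "Im (y $ j) = (P *\<^sub>v xi) $ j"
      using y_Re y_Im j y by (metis carrier_vecD index_map_vec(1))+
    then show "y $ j = (map_mat complex_of_real P *\<^sub>v x) $ j"
      using j P x unfolding x_def
      by (intro complex_eqI) (auto simp: scalar_prod_def Re_sum Im_sum)
  qed (use y P in auto)
  moreover have "x \<in> carrier_vec k" unfolding x_def by simp
  ultimately show "\<exists>x\<in>carrier_vec k. y = map_mat complex_of_real P *\<^sub>v x" by blast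
qed

lemma mult_mat_eq_0_if_range_in_kernel:
  fixes A P :: "'a::semiring_1 mat"
  assumes A: "A \<in> carrier_mat n m" and P: "P \<in> carrier_mat m k"
    and ker: "\<forall>x\<in>carrier_vec k. A *\<^sub>v (P *\<^sub>v x) = 0\<^sub>v n"
  shows "A * P = 0\<^sub>m n k"
proof (rule eq_matI)
  fix i j assume "i < dim_row (0\<^sub>m n k :: 'a mat)" "j < dim_col (0\<^sub>m n k :: 'a mat)"
  then have i: "i < n" and j: "j < k" by auto
  have "col P j = P *\<^sub>v unit_vec k j" using P j by (intro eq_vecI) auto
  then have "(A *\<^sub>v col P j) $ i = 0" using ker i j by simp
  then show "(A * P) $$ (i, j) = 0\<^sub>m n k $$ (i, j)" using i j A P by simp
qed (use A P in auto)

lemma mult_mat_diag_vec_index: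
  assumes "y \<in> carrier_vec n" "i < n"
  shows "(mat_diag n d *\<^sub>v y) $ i = d i * y $ i"
proof -
  have "(mat_diag n d *\<^sub>v y) $ i = (\<Sum>j<n. (if i = j then d j else 0) * y $ j)"
    using assms by (simp add: mat_diag_def scalar_prod_def lessThan_atLeast0)
  also have "\<dots> = (\<Sum>j<n. if j = i then d i * y $ i else 0)"
    by (intro sum.cong) auto
  also have "\<dots> = d i * y $ i"
    using assms by simp
  finally show ?thesis .
qed

lemma of_real_congruence_diag_form:
  fixes Qr :: "real mat" and d :: "nat \<Rightarrow> complex" and x :: "complex vec"
  defines "Q \<equiv> map_mat complex_of_real Qr"
  assumes Qr: "Qr \<in> carrier_mat E k" and x: "x \<in> carrier_vec k"
  shows "(\<Sum>i<k. cnj (x $ i) * ((transpose_mat Q * mat_diag E d * Q) *\<^sub>v x) $ i)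
    = (\<Sum>e<E. d e * complex_of_real ((cmod ((Q *\<^sub>v x) $ e))\<^sup>2))"
proof -
  define y where "y = Q *\<^sub>v x"
  have Q: "Q \<in> carrier_mat E k" using Qr unfolding Q_def by simp
  have y: "y \<in> carrier_vec E" unfolding y_def using Q x by simp
  have QDQx: "(transpose_mat Q * mat_diag E d * Q) *\<^sub>v x = transpose_mat Q *\<^sub>v (mat_diag E d *\<^sub>v y)"
    unfolding y_def using Q x
    by (simp add: assoc_mult_mat_vec[of _ k E _ k] assoc_mult_mat_vec[of _ k E _ E])
  have Qt_index: "(transpose_mat Q *\<^sub>v v) $ i = (\<Sum>e<E. Q $$ (e, i) * v $ e)"
    if "i < k" "v \<in> carrier_vec E" for i v
    using that Q by (simp add: scalar_prod_def lessThan_atLeast0)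
  have form_i: "((transpose_mat Q * mat_diag E d * Q) *\<^sub>v x) $ i
      = (\<Sum>e<E. Q $$ (e, i) * (d e * y $ e))" if "i < k" for i
  proof -
    have "((transpose_mat Q * mat_diag E d * Q) *\<^sub>v x) $ i
        = (\<Sum>e<E. Q $$ (e, i) * (mat_diag E d *\<^sub>v y) $ e)"
      unfolding QDQx using y by (intro Qt_index[OF that] mult_mat_vec_carrier[OF mat_diag_dim])
    also have "\<dots> = (\<Sum>e<E. Q $$ (e, i) * (d e * y $ e))"
      by (rule sum.cong) (simp_all add: mult_mat_diag_vec_index[OF y])
    finally show ?thesis .
  qed
  have cnj_y: "cnj (y $ e) = (\<Sum>i<k. Q $$ (e, i) * cnj (x $ i))" if "e < E" for e
    using that Q Qr x unfolding y_def Q_def by (simp add: scalar_prod_def lessThan_atLeast0 cnj_sum)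
  have "(\<Sum>i<k. cnj (x $ i) * ((transpose_mat Q * mat_diag E d * Q) *\<^sub>v x) $ i)
      = (\<Sum>i<k. \<Sum>e<E. d e * y $ e * (Q $$ (e, i) * cnj (x $ i)))"
    by (simp add: form_i sum_distrib_left mult_ac)
  also have "\<dots> = (\<Sum>e<E. d e * (y $ e * cnj (y $ e)))"
    by (subst sum.swap) (simp add: cnj_y sum_distrib_left mult_ac)
  also have "\<dots> = (\<Sum>e<E. d e * complex_of_real ((cmod (y $ e))\<^sup>2))"
    by (simp only: complex_norm_square)
  finally show ?thesis unfolding y_def .
qed

lemma invertible_of_real_congruence_diag:
  fixes Qr :: "real mat" and d :: "nat \<Rightarrow> complex" and c :: complex
  assumes Qr: "Qr \<in> carrier_mat E k"
    and ker: "\<forall>x\<in>carrier_vec k. Qr *\<^sub>v x = 0\<^sub>v E \<longrightarrow> x = 0\<^sub>v k"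
    and pos: "\<forall>e<E. 0 < Re (c * d e)"
  shows "invertible_mat (transpose_mat (map_mat complex_of_real Qr) * mat_diag E d * map_mat complex_of_real Qr)"
    (is "invertible_mat (transpose_mat ?Q * ?D * ?Q)")
proof (rule invertible_mat_if_kernel_trivial[of _ k])
  show "transpose_mat ?Q * ?D * ?Q \<in> carrier_mat k k"
    using Qr by (intro mult_carrier_mat[of _ _ E]) auto
  show "\<forall>x\<in>carrier_vec k. (transpose_mat ?Q * ?D * ?Q) *\<^sub>v x = 0\<^sub>v k \<longrightarrow> x = 0\<^sub>v k"
  proof (intro ballI impI)
    fix x :: "complex vec"
    assume x: "x \<in> carrier_vec k" and Ax: "(transpose_mat ?Q * ?D * ?Q) *\<^sub>v x = 0\<^sub>v k"
    define y where "y = ?Q *\<^sub>v x"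
    have form: "(\<Sum>e<E. d e * complex_of_real ((cmod (y $ e))\<^sup>2)) = 0"
      using of_real_congruence_diag_form[OF Qr x, of d] Ax x unfolding y_def by simp
    have Re_mult_of_real: "Re (z * complex_of_real r) = Re z * r" for z r
      by simp
    have "(\<Sum>e<E. Re (c * d e) * (cmod (y $ e))\<^sup>2)
        = Re (c * (\<Sum>e<E. d e * complex_of_real ((cmod (y $ e))\<^sup>2)))"
      by (simp only: sum_distrib_left Re_sum mult.assoc[symmetric] Re_mult_of_real)
    also have "\<dots> = 0"
      unfolding form by simp
    finally have "(\<Sum>e<E. Re (c * d e) * (cmod (y $ e))\<^sup>2) = 0" .
    then have "\<forall>e\<in>{..<E}. Re (c * d e) * (cmod (y $ e))\<^sup>2 = 0"
      using pos by (subst sum_nonneg_eq_0_iff[symmetric]) (auto intro: less_imp_le)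
    then have "y $ e = 0" if "e < E" for e
      using pos that by (metis lessThan_iff less_irrefl mult_eq_0_iff norm_eq_zero power_eq_0_iff)
    then have "y = 0\<^sub>v E"
      using Qr x unfolding y_def by (intro eq_vecI) auto
    then show "x = 0\<^sub>v k"
      using of_real_mat_kernel_trivial[OF Qr ker] x unfolding y_def by blast
  qed
qed

lemma incidence_transpose_mult_vec_index:
  fixes y :: "'a::ring_1 vec"
  assumes valid: "valid_graph N edges" and y: "y \<in> carrier_vec N" and e: "e < length edges"
  shows "(transpose_mat (incidence N edges) *\<^sub>v y) $ e = y $ fst (edges ! e) - y $ snd (edges ! e)"
proof -
  obtain a b where ab: "edges ! e = (a, b)" by fastforce
  then have "a < N" "b < N" "a \<noteq> b"
    using valid nth_mem[OF e] unfolding valid_graph_def by auto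
  then have "(transpose_mat (incidence N edges) *\<^sub>v y) $ e
      = (\<Sum>u<N. if u = a then y $ u else 0) - (\<Sum>u<N. if u = b then y $ u else 0)"
    using y e ab unfolding sum_subtractf[symmetric]
    by (auto simp: incidence_def scalar_prod_def lessThan_atLeast0 intro!: sum.cong)
  then show ?thesis
    using \<open>a < N\<close> \<open>b < N\<close> ab by simp
qed

lemma incidence_transpose_kernel_const:
  fixes y :: "'a::ring_1 vec"
  assumes conn: "connected_graph N edges" and y: "y \<in> carrier_vec N"
    and ker: "transpose_mat (incidence N edges) *\<^sub>v y = 0\<^sub>v (length edges)"
    and "u < N" "v < N"
  shows "y $ u = y $ v"
proof -
  have valid: "valid_graph N edges" using conn unfolding connected_graph_def by simp
  have edge: "y $ a = y $ b" if ab_edge: "(a, b) \<in> set edges" for a b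
  proof -
    obtain e where e: "e < length edges" and ab: "edges ! e = (a, b)"
      using ab_edge by (auto simp: in_set_conv_nth)
    have "(transpose_mat (incidence N edges) *\<^sub>v y) $ e = 0"
      using ker e by simp
    then show ?thesis
      using incidence_transpose_mult_vec_index[OF valid y e] ab by simp
  qed
  have "(u, v) \<in> (adj_rel edges)\<^sup>*"
    using conn \<open>u < N\<close> \<open>v < N\<close> unfolding connected_graph_def by blast
  then show ?thesis
  proof (induction rule: rtrancl_induct)
    case (step a b)
    then have "(a, b) \<in> set edges \<or> (b, a) \<in> set edges"
      unfolding adj_rel_def by auto
    then show ?case
      using step.IH edge by metis
  qed simp
qed

lemma transpose_subm_mult_vec:
  fixes A :: "'a::comm_semiring_0 mat"
  assumes A: "A \<in> carrier_mat (n1 + n0) m" and x: "x \<in> carrier_vec n0"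
  shows "transpose_mat (subm A n1 n0 0 m) *\<^sub>v x
    = transpose_mat A *\<^sub>v vec (n1 + n0) (\<lambda>u. if u < n1 then 0 else x $ (u - n1))"
proof (rule eq_vecI)
  fix j assume "j < dim_vec (transpose_mat A *\<^sub>v vec (n1 + n0) (\<lambda>u. if u < n1 then 0 else x $ (u - n1)))"
  then have j: "j < m" using A by simp
  have "(\<Sum>u = 0..<n1 + n0. A $$ (u, j) * (if u < n1 then 0 else x $ (u - n1)))
      = (\<Sum>u = n1..<n1 + n0. A $$ (u, j) * x $ (u - n1))"
    by (subst sum.atLeastLessThan_concat[of 0 n1, symmetric]) auto
  also have "\<dots> = (\<Sum>i = 0..<n0. A $$ (n1 + i, j) * x $ i)"
    using sum.shift_bounds_nat_ivl[of "\<lambda>u. A $$ (u, j) * x $ (u - n1)" 0 n1 n0]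
    by (simp add: add.commute)
  finally show "(transpose_mat (subm A n1 n0 0 m) *\<^sub>v x) $ j
      = (transpose_mat A *\<^sub>v vec (n1 + n0) (\<lambda>u. if u < n1 then 0 else x $ (u - n1))) $ j"
    using A x j by (simp add: subm_def scalar_prod_def)
qed (use A in simp)

lemma incidence_lower_block_transpose_kernel_trivial:
  fixes edges :: "(nat \<times> nat) list"
  assumes conn: "connected_graph N edges" and n0: "n0 < N"
  shows "\<forall>x\<in>carrier_vec n0. transpose_mat (subm (incidence N edges :: 'a::comm_ring_1 mat) (N - n0) n0 0 (length edges))
    *\<^sub>v x = 0\<^sub>v (length edges) \<longrightarrow> x = 0\<^sub>v n0"
proof (intro ballI impI)
  fix x :: "'a vec"
  define n1 where "n1 = N - n0"
  define y where "y = vec (n1 + n0) (\<lambda>u. if u < n1 then 0 else x $ (u - n1))"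
  assume x: "x \<in> carrier_vec n0"
    and ker: "transpose_mat (subm (incidence N edges) (N - n0) n0 0 (length edges)) *\<^sub>v x = 0\<^sub>v (length edges)"
  have N: "N = n1 + n0" and n1: "0 < n1" unfolding n1_def using n0 by auto
  have "incidence N edges \<in> carrier_mat (n1 + n0) (length edges)"
    unfolding incidence_def N by simp
  from transpose_subm_mult_vec[OF this x] ker
  have ker_y: "transpose_mat (incidence N edges) *\<^sub>v y = 0\<^sub>v (length edges)"
    unfolding y_def n1_def by simp
  have "y \<in> carrier_vec N" unfolding y_def N by simp
  then have "y $ (n1 + i) = y $ 0" if "i < n0" for i
    using incidence_transpose_kernel_const[OF conn _ ker_y] that N n1 by simp
  then have "x $ i = 0" if "i < n0" for i
    using that n1 unfolding y_def by simp
  then show "x = 0\<^sub>v n0"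
    using x by (intro eq_vecI) auto
qed

lemma kron_reduction_of_real:
  fixes B P :: "real mat" and d :: "nat \<Rightarrow> complex"
  defines "Bc \<equiv> map_mat complex_of_real B" and "Pc \<equiv> map_mat complex_of_real P"
  assumes B: "B \<in> carrier_mat (n1 + n0) E" and P: "P \<in> carrier_mat E k"
    and range: "{P *\<^sub>v x | x. x \<in> carrier_vec k} = {y \<in> carrier_vec E. subm B n1 n0 0 E *\<^sub>v y = 0\<^sub>v n0}"
    and d: "\<forall>e<E. d e \<noteq> 0"
    and inv_P: "invertible_mat (transpose_mat Pc * mat_diag E d * Pc)"
    and inv_B0: "invertible_mat (subm Bc n1 n0 0 E * minv (mat_diag E d) * transpose_mat (subm Bc n1 n0 0 E))"
  shows "subm Bc 0 n1 0 E * Pc * minv (transpose_mat Pc * mat_diag E d * Pc) * transpose_mat Pc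
      * transpose_mat (subm Bc 0 n1 0 E) = schur_compl (Bc * minv (mat_diag E d) * transpose_mat Bc) n1 n0"
proof (rule kron_reduction)
  have B0: "subm B n1 n0 0 E \<in> carrier_mat n0 E" by simp
  have B0c: "subm Bc n1 n0 0 E = map_mat complex_of_real (subm B n1 n0 0 E)"
    unfolding Bc_def using B by (intro subm_map_mat) auto
  have "subm B n1 n0 0 E * P = 0\<^sub>m n0 k"
    using range by (intro mult_mat_eq_0_if_range_in_kernel[OF B0 P]) blast
  then show "subm Bc n1 n0 0 E * Pc = 0\<^sub>m n0 k"
    unfolding B0c Pc_def of_real_hom.mat_hom_mult[OF B0 P, symmetric] by (intro eq_matI) auto
  show "\<forall>y\<in>carrier_vec E. subm Bc n1 n0 0 E *\<^sub>v y = 0\<^sub>v n0 \<longrightarrow> (\<exists>x\<in>carrier_vec k. y = Pc *\<^sub>v x)"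
    unfolding B0c Pc_def by (rule of_real_mat_kernel_subset_range[OF P B0 range])
  show "mat_diag E d * minv (mat_diag E d) = 1\<^sub>m E"
    unfolding minv_mat_diag[OF d] mat_diag_diag using d by (auto simp: mat_diag_def intro!: eq_matI)
  show "transpose_mat (minv (mat_diag E d)) = minv (mat_diag E d)"
    unfolding minv_mat_diag[OF d] by (auto simp: mat_diag_def intro!: eq_matI)
qed (use B P d inv_P inv_B0 in \<open>auto simp: Bc_def Pc_def minv_mat_diag\<close>)

lemma kron_reduction_of_real_passive:
  fixes B P :: "real mat" and d :: "nat \<Rightarrow> complex" and c1 c2 :: complex
  defines "Bc \<equiv> map_mat complex_of_real B" and "Pc \<equiv> map_mat complex_of_real P"
  assumes B: "B \<in> carrier_mat (n1 + n0) E" and P: "P \<in> carrier_mat E k"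
    and range: "{P *\<^sub>v x | x. x \<in> carrier_vec k} = {y \<in> carrier_vec E. subm B n1 n0 0 E *\<^sub>v y = 0\<^sub>v n0}"
    and P_ker: "\<forall>x\<in>carrier_vec k. P *\<^sub>v x = 0\<^sub>v E \<longrightarrow> x = 0\<^sub>v k"
    and B0_ker: "\<forall>x\<in>carrier_vec n0. transpose_mat (subm B n1 n0 0 E) *\<^sub>v x = 0\<^sub>v E \<longrightarrow> x = 0\<^sub>v n0"
    and pos: "\<forall>e<E. 0 < Re (c1 * d e)" and pos_inverse: "\<forall>e<E. 0 < Re (c2 * inverse (d e))"
  shows "subm Bc 0 n1 0 E * Pc * minv (transpose_mat Pc * mat_diag E d * Pc) * transpose_mat Pc
      * transpose_mat (subm Bc 0 n1 0 E) = schur_compl (Bc * minv (mat_diag E d) * transpose_mat Bc) n1 n0"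
  unfolding Bc_def Pc_def
proof (rule kron_reduction_of_real[OF B P range])
  show d: "\<forall>e<E. d e \<noteq> 0"
    using pos by (metis less_irrefl mult_zero_right zero_complex.sel(1))
  show "invertible_mat (transpose_mat (map_mat complex_of_real P) * mat_diag E d * map_mat complex_of_real P)"
    by (rule invertible_of_real_congruence_diag[OF P P_ker pos])
  have "subm (map_mat complex_of_real B) n1 n0 0 E
      = transpose_mat (map_mat complex_of_real (transpose_mat (subm B n1 n0 0 E)))"
    using B by (auto intro!: eq_matI simp: subm_def)
  then show "invertible_mat (subm (map_mat complex_of_real B) n1 n0 0 E * minv (mat_diag E d)
      * transpose_mat (subm (map_mat complex_of_real B) n1 n0 0 E))"
    using invertible_of_real_congruence_diag[OF _ B0_ker pos_inverse] d
    by (simp add: minv_mat_diag)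
qed

lemma impedance_Re_pos:
  fixes r \<omega> l :: real
  assumes "0 < \<omega>" "0 < l"
  shows "0 < Re (- \<i> * (complex_of_real r + \<i> * complex_of_real \<omega> * complex_of_real l))"
    and "0 < Re (\<i> * inverse (complex_of_real r + \<i> * complex_of_real \<omega> * complex_of_real l))"
proof -
  show "0 < Re (- \<i> * (complex_of_real r + \<i> * complex_of_real \<omega> * complex_of_real l))"
    using assms by simp
  have "0 < r\<^sup>2 + (\<omega> * l)\<^sup>2"
    using assms by (intro add_nonneg_pos) auto
  then show "0 < Re (\<i> * inverse (complex_of_real r + \<i> * complex_of_real \<omega> * complex_of_real l))"
    using assms by (simp add: power2_eq_square)
qed

theorem proposition1:
  fixes N n0 k :: nat and edges :: "(nat \<times> nat) list"
    and w :: "nat \<Rightarrow> complex" and P :: "real mat"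
    and r l :: "nat \<Rightarrow> real" and \<omega> :: real
  defines "E \<equiv> length edges"
  defines "n1 \<equiv> N - n0"
  defines "B \<equiv> (incidence N edges :: real mat)"
  defines "Bc \<equiv> map_mat complex_of_real B"
  defines "B1 \<equiv> subm Bc 0 n1 0 E"
  defines "B0 \<equiv> subm B n1 n0 0 E"
  defines "Pc \<equiv> map_mat complex_of_real P"
  defines "W \<equiv> mat_diag E w"
  assumes conn: "connected_graph N edges"
    and n0_pos: "0 < n0" and n0_lt: "n0 < N"
    and P_dim: "P \<in> carrier_mat E k"
    and P_rank: "\<forall>x \<in> carrier_vec k. P *\<^sub>v x = 0\<^sub>v E \<longrightarrow> x = 0\<^sub>v k"
    and P_range: "{P *\<^sub>v x | x. x \<in> carrier_vec k} = {y \<in> carrier_vec E. B0 *\<^sub>v y = 0\<^sub>v n0}"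
    and w_nz: "\<forall>e < E. w e \<noteq> 0"
    and inv1: "invertible_mat (transpose_mat Pc * W * Pc)"
    and inv2: "invertible_mat (subm Bc n1 n0 0 E * minv W * transpose_mat (subm Bc n1 n0 0 E))"
    and r_nn: "\<forall>e < E. 0 \<le> r e" and l_pos: "\<forall>e < E. 0 < l e" and \<omega>_pos: "0 < \<omega>"
  shows
    "B1 * Pc * minv (transpose_mat Pc * W * Pc) * transpose_mat Pc * transpose_mat B1
       = schur_compl (Bc * minv W * transpose_mat Bc) n1 n0
     \<and> (let Z = mat_diag E (\<lambda>e. complex_of_real (r e) + \<i> * complex_of_real \<omega> * complex_of_real (l e))
        in B1 * Pc * minv (transpose_mat Pc * Z * Pc) * transpose_mat Pc * transpose_mat B1
             = schur_compl (Bc * minv Z * transpose_mat Bc) n1 n0)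
     \<and> (let L = mat_diag E (\<lambda>e. complex_of_real (l e))
        in B1 * Pc * minv (transpose_mat Pc * L * Pc) * transpose_mat Pc * transpose_mat B1
             = schur_compl (Bc * minv L * transpose_mat Bc) n1 n0)"
proof -
  have B: "B \<in> carrier_mat (n1 + n0) E"
    unfolding B_def E_def n1_def incidence_def using n0_lt by simp
  have B0_ker: "\<forall>x\<in>carrier_vec n0. transpose_mat B0 *\<^sub>v x = 0\<^sub>v E \<longrightarrow> x = 0\<^sub>v n0"
    using incidence_lower_block_transpose_kernel_trivial[OF conn n0_lt]
    unfolding B0_def B_def E_def n1_def .
  note reduction = kron_reduction_of_real[OF B P_dim P_range[unfolded B0_def],
      folded Bc_def Pc_def, folded B1_def]
  note reduction_passive = kron_reduction_of_real_passive[OF B P_dim P_range[unfolded B0_def]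
      P_rank B0_ker[unfolded B0_def], folded Bc_def Pc_def, folded B1_def]
  show ?thesis
    unfolding Let_def
  proof (intro conjI, goal_cases)
    case 1
    show ?case
      unfolding W_def by (rule reduction[OF w_nz inv1[unfolded W_def] inv2[unfolded W_def]])
  next
    case 2
    show ?case
      using l_pos \<omega>_pos impedance_Re_pos by (intro reduction_passive[of "- \<i>" _ \<i>]) auto
  next
    case 3
    show ?case
      using l_pos by (intro reduction_passive[of 1 _ 1]) auto
  qed
qed

end
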